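(* Let $\{\mathcal G,(\Gamma_0,\Gamma_1),(\widetilde\Gamma_0,\widetilde\Gamma_1)\}$ be a triple for the adjoint pair $\{S,\widetilde S\}$ satisfying (G), (D), (M), with $\rho(A_0)\neq\emptyset$, $\gamma$-fields $\gamma,\widetilde\gamma$ and Weyl functions $M,\widetilde M$. Let $B_1,B_2,B_1',B_2'$ be linear operators in $\mathcal G$ such that $(B_1B_2\varphi,\psi)=(\varphi,B_1'B_2'\psi)$ for all $\varphi\in\operatorname{dom}(B_1B_2)$, $\psi\in\operatorname{dom}(B_1'B_2')$. Suppose there is $\lambda\in\rho(A_0)$ such that for every $f\in\mathfrak H$: $\widetilde\gamma(\overline\lambda)^*f\in\operatorname{dom}B_2$ and $B_2\widetilde\gamma(\overline\lambda)^*f\in\operatorname{ran}(I-B_2M(\lambda)B_1)$; and for every $g\in\mathfrak H$: $\gamma(\lambda)^*g\in\operatorname{dom}B_2'$ and $B_2'\gamma(\lambda)^*g\in\operatorname{ran}(I-B_2'\widetilde M(\overline\lambda)B_1')$. Then $A_{B_1B_2}=(\widetilde A_{B_1'B_2'})^*$; in particular $A_{B_1B_2}$ is a closed operator in $\mathfrak H$ with $\lambda\in\rho(A_{B_1B_2})$.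
   Context: Let $\mathfrak H$ be a separable Hilbert space. An adjoint pair $\{S,\widetilde S\}$ consists of densely defined closed operators $S,\widetilde S$ in $\mathfrak H$ with $(Sf,g)=(f,\widetilde Sg)$ for all $f\in\operatorname{dom}S$, $g\in\operatorname{dom}\widetilde S$. Fix operators $T\subset S^*$ and $\widetilde T\subset\widetilde S^*$ which are cores, i.e. $\overline T=S^*$ and $\overline{\widetilde T}=\widetilde S^*$. A triple $\{\mathcal G,(\Gamma_0,\Gamma_1),(\widetilde\Gamma_0,\widetilde\Gamma_1)\}$ for $\{S,\widetilde S\}$ consists of a Hilbert space $\mathcal G$ and linear maps $\Gamma_0,\Gamma_1:\operatorname{dom}T\to\mathcal G$, $\widetilde\Gamma_0,\widetilde\Gamma_1:\operatorname{dom}\widetilde T\to\mathcal G$. Put $A_0:=T\upharpoonright\ker\Gamma_0$ and $\widetilde A_0:=\widetilde T\upharpoonright\ker\widetilde\Gamma_0$. Conditions: (G) $(Tf,g)_{\mathfrak H}-(f,\widetilde Tg)_{\mathfrak H}=(\Gamma_1f,\widetilde\Gamma_0g)_{\mathcal G}-(\Gamma_0f,\widetilde\Gamma_1g)_{\mathcal G}$ for all $f\in\operatorname{dom}T$, $g\in\operatorname{dom}\widetilde T$; (D) $\operatorname{ran}\Gamma_0$ and $\operatorname{ran}\widetilde\Gamma_0$ are dense in $\mathcal G$; (M) $A_0^*=\widetilde A_0$ and $\widetilde A_0^*=A_0$ (so $\lambda\in\rho(A_0)$ iff $\overline\lambda\in\rho(\widetilde A_0)$). For $\lambda\in\rho(A_0)$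 one has $\operatorname{dom}T=\ker\Gamma_0\dotplus\ker(T-\lambda)$, so $\Gamma_0\upharpoonright\ker(T-\lambda)$ is injective; similarly for $\widetilde T$. The $\gamma$-fields are $\gamma(\lambda):=(\Gamma_0\upharpoonright\ker(T-\lambda))^{-1}$, $\widetilde\gamma(\mu):=(\widetilde\Gamma_0\upharpoonright\ker(\widetilde T-\mu))^{-1}$; the Weyl functions are $M(\lambda):=\Gamma_1\gamma(\lambda)$, $\lambda\in\rho(A_0)$, and $\widetilde M(\mu):=\widetilde\Gamma_1\widetilde\gamma(\mu)$, $\mu\in\rho(\widetilde A_0)$. Products of operators have their natural domains, e.g. $\operatorname{dom}(B_1B_2)=\{\varphi\in\operatorname{dom}B_2:B_2\varphi\in\operatorname{dom}B_1\}$. Define $A_{B_1B_2}f:=Tf$ on $\operatorname{dom}A_{B_1B_2}:=\{f\in\operatorname{dom}T:\Gamma_1f\in\operatorname{dom}(B_1B_2),\ B_1B_2\Gamma_1f=\Gamma_0f\}$ and $\widetilde A_{B_1'B_2'}g:=\widetilde Tg$ on $\operatorname{dom}\widetilde A_{B_1'B_2'}:=\{g\in\operatorname{dom}\widetilde T:\widetilde\Gamma_1g\in\operatorname{dom}(B_1'B_2'),\ B_1'B_2'\widetilde\Gamma_1g=\widetilde\Gamma_0g\}$. The resolvent set $\rho(A)$ consists of $\lambda$ such that $A-\lambda$ is bijective onto $\mathfrak H$ with bounded inverse. *)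

theory Defs
  imports "HOL-Analysis.Analysis"
begin

class chilbert = banach +
  fixes scaleC :: "complex \<Rightarrow> 'a \<Rightarrow> 'a"
    and cinner :: "'a \<Rightarrow> 'a \<Rightarrow> complex"
  assumes scaleC_add_right: "scaleC a (x + y) = scaleC a x + scaleC a y"
    and scaleC_add_left: "scaleC (a + b) x = scaleC a x + scaleC b x"
    and scaleC_scaleC: "scaleC a (scaleC b x) = scaleC (a * b) x"
    and scaleC_one: "scaleC 1 x = x"
    and scaleC_of_real: "scaleC (complex_of_real r) x = scaleR r x"
    and cinner_add_left: "cinner (x + y) z = cinner x z + cinner y z"
    and cinner_scaleC_left: "cinner (scaleC a x) y = a * cinner x y"
    and cinner_commute: "cinner x y = cnj (cinner y x)"
    and norm_cinner: "norm x = sqrt (Re (cinner x x))"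

text \<open>An (unbounded) operator from 'a to 'b is identified with its graph
G :: ('a \<times> 'b) set; dom = Domain G, ran = Range G.\<close>

definition lin_op :: "('a::chilbert \<times> 'b::chilbert) set \<Rightarrow> bool" where
  "lin_op G \<longleftrightarrow> (0, 0) \<in> G
     \<and> (\<forall>x y u v. (x, y) \<in> G \<longrightarrow> (u, v) \<in> G \<longrightarrow> (x + u, y + v) \<in> G)
     \<and> (\<forall>c x y. (x, y) \<in> G \<longrightarrow> (scaleC c x, scaleC c y) \<in> G)
     \<and> (\<forall>x y z. (x, y) \<in> G \<longrightarrow> (x, z) \<in> G \<longrightarrow> y = z)"

definition opapp :: "('a \<times> 'b) set \<Rightarrow> 'a \<Rightarrow> 'b" where
  "opapp G x = (THE y. (x, y) \<in> G)"

definition densely_defined :: "('a::topological_space \<times> 'b) set \<Rightarrow> bool" where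
  "densely_defined G \<longleftrightarrow> closure (Domain G) = UNIV"

text \<open>Adjoint (defined as a relation; single-valued when G is densely defined).\<close>
definition adj :: "('a::chilbert \<times> 'b::chilbert) set \<Rightarrow> ('b \<times> 'a) set" where
  "adj G = {(g, h). \<forall>f k. (f, k) \<in> G \<longrightarrow> cinner k g = cinner f h}"

text \<open>Product with natural domain: ocomp B1 B2 = B1 B2 (apply B2 first).\<close>
definition ocomp :: "('b \<times> 'c) set \<Rightarrow> ('a \<times> 'b) set \<Rightarrow> ('a \<times> 'c) set" where
  "ocomp B1 B2 = {(x, z). \<exists>y. (x, y) \<in> B2 \<and> (y, z) \<in> B1}"

definition shift :: "('a::chilbert \<times> 'a) set \<Rightarrow> complex \<Rightarrow> ('a \<times> 'a) set" where
  "shift A l = {(f, k - scaleC l f) | f k. (f, k) \<in> A}"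

definition idminus :: "('a::chilbert \<times> 'a) set \<Rightarrow> ('a \<times> 'a) set" where
  "idminus B = {(x, x - y) | x y. (x, y) \<in> B}"

definition resolvent_set :: "('a::chilbert \<times> 'a) set \<Rightarrow> complex set" where
  "resolvent_set A = {l. Range (shift A l) = UNIV
      \<and> (\<forall>f. (f, 0) \<in> shift A l \<longrightarrow> f = 0)
      \<and> (\<exists>C. \<forall>f k. (f, k) \<in> shift A l \<longrightarrow> norm f \<le> C * norm k)}"

definition clinear_on :: "'a::chilbert set \<Rightarrow> ('a \<Rightarrow> 'b::chilbert) \<Rightarrow> bool" where
  "clinear_on D F \<longleftrightarrow> (\<forall>x\<in>D. \<forall>y\<in>D. F (x + y) = F x + F y)
                     \<and> (\<forall>x\<in>D. \<forall>c. F (scaleC c x) = scaleC c (F x))"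

definition adjoint_pair :: "('a::chilbert \<times> 'a) set \<Rightarrow> ('a \<times> 'a) set \<Rightarrow> bool" where
  "adjoint_pair S S' \<longleftrightarrow> lin_op S \<and> lin_op S' \<and> densely_defined S \<and> densely_defined S'
     \<and> closed S \<and> closed S'
     \<and> (\<forall>f k g h. (f, k) \<in> S \<longrightarrow> (g, h) \<in> S' \<longrightarrow> cinner k g = cinner f h)"

text \<open>A_0 = T restricted to ker Gamma_0\<close>
definition restr_ker :: "('a \<times> 'a) set \<Rightarrow> ('a \<Rightarrow> 'b::zero) \<Rightarrow> ('a \<times> 'a) set" where
  "restr_ker T G0 = {(f, k). (f, k) \<in> T \<and> G0 f = 0}"

text \<open>gamma-field: gamma(l) = (Gamma_0 restricted to ker (T - l))^{-1}\<close>
definition gamma_field :: "('a::chilbert \<times> 'a) set \<Rightarrow> ('a \<Rightarrow> 'b) \<Rightarrow> complex \<Rightarrow> ('b \<times> 'a) set" where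
  "gamma_field T G0 l = {(G0 f, f) | f. (f, scaleC l f) \<in> T}"

text \<open>Weyl function M(l) = Gamma_1 gamma(l)\<close>
definition weyl :: "('a::chilbert \<times> 'a) set \<Rightarrow> ('a \<Rightarrow> 'b) \<Rightarrow> ('a \<Rightarrow> 'b) \<Rightarrow> complex \<Rightarrow> ('b \<times> 'b) set" where
  "weyl T G0 G1 l = {(G0 f, G1 f) | f. (f, scaleC l f) \<in> T}"

text \<open>A_{B1 B2} = T restricted to {f. Gamma_1 f \<in> dom(B1 B2), B1 B2 Gamma_1 f = Gamma_0 f}\<close>
definition ext_op :: "('a \<times> 'a) set \<Rightarrow> ('a \<Rightarrow> 'b) \<Rightarrow> ('a \<Rightarrow> 'b) \<Rightarrow> ('b \<times> 'b) set \<Rightarrow> ('b \<times> 'b) set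
    \<Rightarrow> ('a \<times> 'a) set" where
  "ext_op T G0 G1 B1 B2 = {(f, k). (f, k) \<in> T \<and> (G1 f, G0 f) \<in> ocomp B1 B2}"

end

theory Submission
  imports Defs
begin

text \<open>
  Write \<open>A\<close> for \<open>A\<^bsub>B1 B2\<^esub>\<close>, \<open>A'\<close> for its tilded counterpart and \<open>\<mu> = cnj \<lambda>\<close>. Green's
  identity together with the adjointness of \<open>B1 B2\<close> and \<open>B1' B2'\<close> gives \<open>A \<subseteq> A'\<^sup>*\<close>. The
  hypotheses make \<open>A - \<lambda>\<close> surjective: given \<open>k\<close>, solve \<open>(A\<^sub>0 - \<lambda>) h = k\<close>; then
  \<open>\<gamma>'(\<mu>)\<^sup>* k = \<Gamma>\<^sub>1 h\<close>, and the range condition on \<open>B2 \<Gamma>\<^sub>1 h\<close> yields \<open>f\<^sub>1 \<in> ker (T - \<lambda>)\<close>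
  with \<open>h + f\<^sub>1 \<in> dom A\<close> and \<open>(A - \<lambda>)(h + f\<^sub>1) = k\<close>. Symmetrically \<open>A' - \<mu>\<close> is surjective,
  once \<open>A\<^sub>0' - \<mu>\<close> is; this follows from \<open>A\<^sub>0' = A\<^sub>0\<^sup>*\<close> and the closed range theorem.
  An inclusion \<open>A \<subseteq> A'\<^sup>*\<close> with both \<open>A - \<lambda>\<close> and \<open>A' - \<mu>\<close> surjective is an equality, so
  \<open>A\<close> is closed and \<open>A - \<lambda>\<close> is bijective; its inverse is weakly bounded because
  \<open>A = A'\<^sup>*\<close>, hence bounded by the uniform boundedness principle.
\<close>

lemma scaleC_zero_right [simp]: "scaleC a (0::'a::chilbert) = 0"
  using scaleC_add_right[of a "0::'a" 0] by simp

lemma scaleC_zero_left [simp]: "scaleC 0 (x::'a::chilbert) = 0"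
  using scaleC_of_real[of 0 x] by simp

lemma scaleC_minus_right: "scaleC a (- x) = - scaleC a (x::'a::chilbert)"
proof -
  have "scaleC a x + scaleC a (- x) = 0" using scaleC_add_right[of a x "-x"] by simp
  thus ?thesis by (simp add: add_eq_0_iff2)
qed

lemma scaleC_diff_right: "scaleC a (x - y) = scaleC a x - scaleC a (y::'a::chilbert)"
  by (metis diff_conv_add_uminus scaleC_add_right scaleC_minus_right)

lemma scaleC_minus_left: "scaleC (- a) x = - scaleC a (x::'a::chilbert)"
proof -
  have "scaleC a x + scaleC (-a) x = 0" using scaleC_add_left[of a "-a" x] by simp
  thus ?thesis by (simp add: add_eq_0_iff2)
qed

lemma scaleC_minus1: "scaleC (-1) x = - (x::'a::chilbert)"
  by (simp add: scaleC_minus_left scaleC_one)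

lemma cinner_zero_left [simp]: "cinner 0 (y::'a::chilbert) = 0"
  using cinner_add_left[of "0::'a" 0 y] by simp

lemma cinner_minus_left: "cinner (- x) y = - cinner x (y::'a::chilbert)"
proof -
  have "cinner x y + cinner (-x) y = 0" using cinner_add_left[of x "-x" y] by simp
  thus ?thesis by (simp add: add_eq_0_iff2)
qed

lemma cinner_diff_left: "cinner (x - y) z = cinner x z - cinner y (z::'a::chilbert)"
  by (metis diff_conv_add_uminus cinner_add_left cinner_minus_left)

lemma cinner_add_right: "cinner x (y + z) = cinner x y + cinner x (z::'a::chilbert)"
  by (metis cinner_add_left cinner_commute complex_cnj_add)

lemma cinner_zero_right [simp]: "cinner x (0::'a::chilbert) = 0"
  using cinner_commute[of x 0] by simp

lemma cinner_diff_right: "cinner x (y - z) = cinner x y - cinner x (z::'a::chilbert)"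
  by (metis cinner_commute cinner_diff_left complex_cnj_diff)

lemma cinner_scaleC_right: "cinner x (scaleC a y) = cnj a * cinner x (y::'a::chilbert)"
  by (metis cinner_commute cinner_scaleC_left complex_cnj_mult)

lemma cinner_scaleR_right: "cinner x (scaleR r y) = complex_of_real r * cinner x (y::'a::chilbert)"
  unfolding scaleC_of_real[symmetric] cinner_scaleC_right by simp

lemma cinner_self: "cinner x x = complex_of_real ((norm (x::'a::chilbert))\<^sup>2)"
proof -
  have "Im (cinner x x) = 0" using arg_cong[OF cinner_commute[of x x], of Im] by simp
  moreover have "0 \<le> Re (cinner x x)" using norm_ge_zero[of x] unfolding norm_cinner[of x] by simp
  ultimately show ?thesis using norm_cinner[of x] by (simp add: complex_eq_iff)
qed

lemma cinner_self_eq_0 [simp]: "cinner x x = 0 \<longleftrightarrow> (x::'a::chilbert) = 0"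
  by (simp add: cinner_self)

lemma norm_scaleC: "norm (scaleC a x) = cmod a * norm (x::'a::chilbert)"
proof -
  have "cinner (scaleC a x) (scaleC a x) = (a * cnj a) * cinner x x"
    by (simp add: cinner_scaleC_left cinner_scaleC_right)
  also have "\<dots> = complex_of_real ((cmod a * norm x)\<^sup>2)"
    unfolding complex_norm_square[symmetric] cinner_self by (simp add: power_mult_distrib)
  finally have "(norm (scaleC a x))\<^sup>2 = (cmod a * norm x)\<^sup>2"
    unfolding cinner_self of_real_eq_iff .
  thus ?thesis by (simp add: power2_eq_iff_nonneg)
qed

lemma parallelogram_law:
  fixes a b :: "'a::chilbert"
  shows "(norm (a + b))\<^sup>2 + (norm (a - b))\<^sup>2 = 2 * (norm a)\<^sup>2 + 2 * (norm b)\<^sup>2"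
proof -
  have "cinner (a + b) (a + b) + cinner (a - b) (a - b) = 2 * cinner a a + 2 * cinner b b"
    by (simp add: cinner_add_left cinner_add_right cinner_diff_left cinner_diff_right)
  from arg_cong[OF this, of Re] show ?thesis by (simp add: cinner_self)
qed

lemma norm_diff_projection_sq:
  fixes x y :: "'a::chilbert"
  assumes "y \<noteq> 0"
  shows "(norm (x - scaleC (cinner x y / complex_of_real ((norm y)\<^sup>2)) y))\<^sup>2
          = (norm x)\<^sup>2 - (cmod (cinner x y))\<^sup>2 / (norm y)\<^sup>2"
proof -
  define N where "N = complex_of_real ((norm y)\<^sup>2)"
  define w where "w = cinner x y"
  define t where "t = w / N"
  have N: "N \<noteq> 0" using assms by (simp add: N_def)
  have wy: "cinner y x = cnj w" unfolding w_def by (metis cinner_commute)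
  have "cinner (x - scaleC t y) (x - scaleC t y)
      = cinner x x - cnj t * w - t * cnj w + t * cnj t * N"
    unfolding cinner_diff_left cinner_diff_right cinner_scaleC_left cinner_scaleC_right wy
    by (simp add: w_def N_def cinner_self ring_distribs mult.assoc)
  also have "\<dots> = cinner x x - w * cnj w / N"
    using N by (simp add: t_def N_def field_simps power2_eq_square)
  also have "\<dots> = complex_of_real ((norm x)\<^sup>2 - (cmod w)\<^sup>2 / (norm y)\<^sup>2)"
    unfolding complex_norm_square[symmetric] cinner_self N_def by simp
  finally show ?thesis unfolding cinner_self of_real_eq_iff t_def N_def w_def .
qed

lemma cauchy_schwarz: "cmod (cinner x y) \<le> norm x * norm (y::'a::chilbert)"
proof (cases "y = 0")
  case False
  have "0 \<le> (norm x)\<^sup>2 - (cmod (cinner x y))\<^sup>2 / (norm y)\<^sup>2"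
    unfolding norm_diff_projection_sq[OF False, of x, symmetric] by (rule zero_le_power2)
  hence "(cmod (cinner x y))\<^sup>2 / (norm y)\<^sup>2 \<le> (norm x)\<^sup>2" by simp
  hence "(cmod (cinner x y))\<^sup>2 \<le> (norm x * norm y)\<^sup>2"
    using False by (simp add: divide_le_eq power_mult_distrib)
  thus ?thesis by (rule power2_le_imp_le) simp
qed simp

lemma tendsto_cinner_right:
  fixes g :: "_ \<Rightarrow> 'a::chilbert"
  assumes "(g \<longlongrightarrow> a) F" shows "((\<lambda>n. cinner k (g n)) \<longlongrightarrow> cinner k a) F"
proof -
  have "((\<lambda>n. norm k * norm (g n - a)) \<longlongrightarrow> 0) F"
    using assms by (intro tendsto_mult_right_zero tendsto_norm_zero LIM_zero)
  moreover have "\<forall>n. norm (cinner k (g n) - cinner k a) \<le> norm k * norm (g n - a)"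
    using cauchy_schwarz by (simp only: cinner_diff_right[symmetric]) blast
  ultimately have "((\<lambda>n. cinner k (g n) - cinner k a) \<longlongrightarrow> 0) F"
    by (rule Lim_null_comparison[OF always_eventually, rotated])
  thus ?thesis by (rule LIM_zero_cancel)
qed

lemma tendsto_cinner_left:
  fixes g :: "_ \<Rightarrow> 'a::chilbert"
  assumes "(g \<longlongrightarrow> a) F" shows "((\<lambda>n. cinner (g n) k) \<longlongrightarrow> cinner a k) F"
  using tendsto_cnj[OF tendsto_cinner_right[OF assms, of k]] by (simp flip: cinner_commute)

lemma tendsto_scaleC:
  fixes g :: "_ \<Rightarrow> 'a::chilbert"
  assumes "(g \<longlongrightarrow> a) F" shows "((\<lambda>n. scaleC c (g n)) \<longlongrightarrow> scaleC c a) F"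
proof -
  have "((\<lambda>n. cmod c * norm (g n - a)) \<longlongrightarrow> 0) F"
    using assms by (intro tendsto_mult_right_zero tendsto_norm_zero LIM_zero)
  moreover have "\<forall>n. norm (scaleC c (g n) - scaleC c a) \<le> cmod c * norm (g n - a)"
    by (simp add: scaleC_diff_right[symmetric] norm_scaleC)
  ultimately have "((\<lambda>n. scaleC c (g n) - scaleC c a) \<longlongrightarrow> 0) F"
    by (rule Lim_null_comparison[OF always_eventually, rotated])
  thus ?thesis by (rule LIM_zero_cancel)
qed

lemma continuous_on_cinner_left: "continuous_on S (\<lambda>v::'a::chilbert. cinner v u)"
  unfolding continuous_on_def using tendsto_cinner_left[OF tendsto_ident_at] by blast

lemma continuous_on_cinner_right: "continuous_on S (\<lambda>v::'a::chilbert. cinner u v)"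
  unfolding continuous_on_def using tendsto_cinner_right[OF tendsto_ident_at] by blast

lemma closed_orthogonal: "closed {v::'a::chilbert. cinner v u = 0}"
  by (rule closed_Collect_eq[OF continuous_on_cinner_left continuous_on_const])

lemma orthogonal_dense_eq_0:
  fixes u :: "'a::chilbert"
  assumes "closure D = UNIV" "\<And>v. v \<in> D \<Longrightarrow> cinner v u = 0"
  shows "u = 0"
proof -
  have "closure D \<subseteq> {v. cinner v u = 0}"
    using assms(2) by (intro closure_minimal closed_orthogonal) blast
  hence "cinner u u = 0" using assms(1) by blast
  thus ?thesis by simp
qed

section \<open>Projection onto closed subspaces\<close>

definition csubspace :: "'a::chilbert set \<Rightarrow> bool" where
  "csubspace V \<longleftrightarrow> 0 \<in> V \<and> (\<forall>a\<in>V. \<forall>b\<in>V. a + b \<in> V) \<and> (\<forall>c. \<forall>a\<in>V. scaleC c a \<in> V)"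

lemma csubspace_add: "csubspace V \<Longrightarrow> a \<in> V \<Longrightarrow> b \<in> V \<Longrightarrow> a + b \<in> V"
  unfolding csubspace_def by blast

lemma csubspace_scaleC: "csubspace V \<Longrightarrow> a \<in> V \<Longrightarrow> scaleC c a \<in> V"
  unfolding csubspace_def by blast

text \<open>The midpoint of two near-minimisers of the distance to \<open>x\<close> lies in \<open>V\<close>, so the
  parallelogram law forces them together.\<close>

lemma csubspace_parallelogram_bound:
  fixes V :: "'a::chilbert set"
  assumes V: "csubspace V" and ab: "a \<in> V" "b \<in> V"
    and d: "0 \<le> d" "\<And>v. v \<in> V \<Longrightarrow> d \<le> norm (x - v)"
  shows "(norm (a - b))\<^sup>2 \<le> 2 * ((norm (x - a))\<^sup>2 - d\<^sup>2) + 2 * ((norm (x - b))\<^sup>2 - d\<^sup>2)"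
proof -
  have "scaleR (1/2) (a + b) \<in> V"
    unfolding scaleC_of_real[symmetric] using V ab by (intro csubspace_add csubspace_scaleC)
  hence "d \<le> norm (x - scaleR (1/2) (a + b))" by (rule d(2))
  also have "x - scaleR (1/2) (a + b) = scaleR (1/2) ((x - a) + (x - b))"
    by (simp add: algebra_simps scaleR_2[symmetric])
  finally have "2 * d \<le> norm ((x - a) + (x - b))" by simp
  hence "(2 * d)\<^sup>2 \<le> (norm ((x - a) + (x - b)))\<^sup>2" by (rule power_mono) (simp add: d(1))
  moreover have "(x - a) - (x - b) = b - a" by simp
  ultimately show ?thesis
    using parallelogram_law[of "x - a" "x - b"] norm_minus_commute[of a b]
    by (simp add: power_mult_distrib)
qed

lemma closed_csubspace_nearest_point:
  fixes V :: "'a::chilbert set"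
  assumes "closed V" "csubspace V"
  obtains p where "p \<in> V" "\<And>v. v \<in> V \<Longrightarrow> norm (x - p) \<le> norm (x - v)"
proof -
  define d where "d = infdist x V"
  have "V \<noteq> {}" using assms(2) unfolding csubspace_def by blast
  have d_le: "d \<le> norm (x - v)" if "v \<in> V" for v
    using infdist_le[OF that, of x] by (simp add: d_def dist_norm)
  have "\<exists>v\<in>V. norm (x - v) < d + 1 / real (Suc n)" for n
    using cInf_lessD[of "dist x ` V" "d + 1 / real (Suc n)"] \<open>V \<noteq> {}\<close>
    by (simp add: d_def infdist_notempty dist_norm)
  then obtain v where vV: "\<And>n. v n \<in> V" and v_lt: "\<And>n. norm (x - v n) < d + 1 / real (Suc n)"
    by metis
  have "(\<lambda>n. d + 1 / real (Suc n)) \<longlonglongrightarrow> d + 0"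
    by (intro tendsto_intros LIMSEQ_inverse_real_of_nat[unfolded inverse_eq_divide])
  moreover have "\<forall>n. d \<le> norm (x - v n)" "\<forall>n. norm (x - v n) \<le> d + 1 / real (Suc n)"
    using d_le[OF vV] less_imp_le[OF v_lt] by blast+
  ultimately have dist_lim: "(\<lambda>n. norm (x - v n)) \<longlonglongrightarrow> d"
    using tendsto_sandwich[OF always_eventually always_eventually tendsto_const] by simp
  define \<delta> where "\<delta> n = (norm (x - v n))\<^sup>2 - d\<^sup>2" for n
  have "\<delta> \<longlonglongrightarrow> d\<^sup>2 - d\<^sup>2"
    unfolding \<delta>_def by (intro tendsto_intros dist_lim)
  hence \<delta>_lim: "\<delta> \<longlonglongrightarrow> 0" by simp
  have gap: "(norm (v m - v n))\<^sup>2 \<le> 2 * \<delta> m + 2 * \<delta> n" for m n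
    unfolding \<delta>_def
    by (rule csubspace_parallelogram_bound[OF assms(2) vV vV _ d_le]) (simp add: d_def infdist_nonneg)
  have "Cauchy v"
  proof (rule metric_CauchyI)
    fix e :: real assume "0 < e"
    then obtain M where M: "\<And>n. n \<ge> M \<Longrightarrow> \<bar>\<delta> n\<bar> < e\<^sup>2 / 4"
      using LIMSEQ_D[OF \<delta>_lim, of "e\<^sup>2 / 4"] by auto
    have "dist (v m) (v n) < e" if "m \<ge> M" "n \<ge> M" for m n
    proof -
      have "(norm (v m - v n))\<^sup>2 < e\<^sup>2"
        using gap[of m n] M[OF that(1)] M[OF that(2)] by linarith
      thus ?thesis using \<open>0 < e\<close> by (simp add: dist_norm power_less_imp_less_base)
    qed
    thus "\<exists>M. \<forall>m\<ge>M. \<forall>n\<ge>M. dist (v m) (v n) < e" by blast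
  qed
  then obtain p where v_lim: "v \<longlonglongrightarrow> p" using Cauchy_convergent_iff convergent_def by blast
  have "p \<in> V" using closed_sequentially[OF assms(1)] vV v_lim by blast
  moreover have "(\<lambda>n. norm (x - v n)) \<longlonglongrightarrow> norm (x - p)" by (intro tendsto_intros v_lim)
  hence "norm (x - p) = d" using dist_lim LIMSEQ_unique by blast
  ultimately show ?thesis using that d_le by auto
qed

lemma nearest_point_orthogonal:
  fixes V :: "'a::chilbert set"
  assumes V: "csubspace V" and p: "p \<in> V" "\<And>v. v \<in> V \<Longrightarrow> norm (x - p) \<le> norm (x - v)"
    and w: "w \<in> V"
  shows "cinner w (x - p) = 0"
proof (cases "w = 0")
  case False
  define t where "t = cinner (x - p) w / complex_of_real ((norm w)\<^sup>2)"
  have "p + scaleC t w \<in> V" using V p(1) w by (intro csubspace_add csubspace_scaleC)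
  hence "norm (x - p) \<le> norm ((x - p) - scaleC t w)" using p(2) by (simp add: algebra_simps)
  hence "(norm (x - p))\<^sup>2 \<le> (norm ((x - p) - scaleC t w))\<^sup>2" by (rule power_mono) simp
  hence "(norm (x - p))\<^sup>2 \<le> (norm (x - p))\<^sup>2 - (cmod (cinner (x - p) w))\<^sup>2 / (norm w)\<^sup>2"
    unfolding t_def norm_diff_projection_sq[OF False] .
  hence "cinner (x - p) w = 0"
    using False by (simp add: divide_le_0_iff)
  thus ?thesis by (metis cinner_commute complex_cnj_zero)
qed simp

lemma closed_csubspace_eq_UNIV:
  fixes V :: "'a::chilbert set"
  assumes "closed V" "csubspace V" and orth: "\<And>k. (\<forall>u\<in>V. cinner u k = 0) \<Longrightarrow> k = 0"
  shows "V = UNIV"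
proof (intro set_eqI iffI)
  fix x :: 'a
  obtain p where "p \<in> V" "\<And>v. v \<in> V \<Longrightarrow> norm (x - p) \<le> norm (x - v)"
    using closed_csubspace_nearest_point[OF assms(1,2)] by metis
  hence "x - p = 0" using nearest_point_orthogonal[OF assms(2)] by (intro orth) blast
  thus "x \<in> V" using \<open>p \<in> V\<close> by simp
qed simp

lemma norm_le_of_cinner_bounded_on_ball:
  fixes f :: "'a::chilbert"
  assumes r: "r > 0" and bound: "\<And>y. y \<in> ball x0 r \<Longrightarrow> cmod (cinner f y) \<le> c"
  shows "norm f \<le> 4 * c / r"
proof (cases "f = 0")
  case True
  have "0 \<le> c" using bound[of x0] r by (metis centre_in_ball norm_ge_zero order_trans)
  thus ?thesis using True r by simp
next
  case False
  define y where "y = scaleR (r / 2 / norm f) f"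
  have "norm y = r / 2" using False r by (simp add: y_def)
  hence "x0 + y \<in> ball x0 r" using r by (simp add: dist_norm)
  hence "cmod (cinner f (x0 + y) - cinner f x0) \<le> 2 * c"
    using bound[of "x0 + y"] bound[of x0] r by (smt (verit) centre_in_ball norm_triangle_ineq4)
  moreover have "cinner f (x0 + y) - cinner f x0 = complex_of_real (r / 2 * norm f)"
    using False by (simp add: cinner_add_right y_def cinner_scaleR_right cinner_self power2_eq_square)
  ultimately have "r / 2 * norm f \<le> 2 * c" using r by (simp add: norm_mult)
  thus ?thesis using r by (simp add: field_simps)
qed

section \<open>Uniform boundedness\<close>

lemma weakly_bounded_imp_bounded:
  fixes P :: "'a::chilbert set"
  assumes weak: "\<And>x. \<exists>c. \<forall>f\<in>P. cmod (cinner f x) \<le> c"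
  shows "\<exists>C. \<forall>f\<in>P. norm f \<le> C"
proof -
  define F where "F n = {x. \<forall>f\<in>P. cmod (cinner f x) \<le> real n}" for n :: nat
  have closed_F: "closed (F n)" for n
  proof -
    have "F n = (\<Inter>f\<in>P. {x. cmod (cinner f x) \<le> real n})" by (auto simp: F_def)
    thus ?thesis
      by (auto intro!: closed_INT closed_Collect_le continuous_on_norm continuous_on_cinner_right)
  qed
  have "\<Union>(range F) = UNIV"
  proof (intro set_eqI iffI)
    fix x :: 'a
    obtain c where "\<forall>f\<in>P. cmod (cinner f x) \<le> c" using weak by blast
    moreover obtain n :: nat where "c \<le> real n" using real_arch_simple by blast
    ultimately have "x \<in> F n" unfolding F_def by (auto intro: order_trans)
    thus "x \<in> \<Union>(range F)" by blast
  qed simp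
  hence "\<exists>n. interior (F n) \<noteq> {}"
    using Baire_category_alt[of euclidean "range F"] closed_F
    by (auto simp: completely_metrizable_space_euclidean closed_closedin[symmetric]) blast
  then obtain n x0 where "x0 \<in> interior (F n)" by blast
  then obtain r where r: "r > 0" "ball x0 r \<subseteq> F n" by (auto simp: mem_interior)
  have "norm f \<le> 4 * real n / r" if "f \<in> P" for f
    using r that by (intro norm_le_of_cinner_bounded_on_ball) (auto simp: F_def)
  thus ?thesis by blast
qed

section \<open>Operators as graphs\<close>

lemma lin_op_add: "lin_op G \<Longrightarrow> (x, y) \<in> G \<Longrightarrow> (u, v) \<in> G \<Longrightarrow> (x + u, y + v) \<in> G"
  unfolding lin_op_def by blast

lemma lin_op_scaleC: "lin_op G \<Longrightarrow> (x, y) \<in> G \<Longrightarrow> (scaleC c x, scaleC c y) \<in> G"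
  unfolding lin_op_def by blast

lemma lin_op_minus: "lin_op G \<Longrightarrow> (x, y) \<in> G \<Longrightarrow> (- x, - y) \<in> G"
  using lin_op_scaleC[of G x y "-1"] by (simp add: scaleC_minus1)

lemma lin_op_diff: "lin_op G \<Longrightarrow> (x, y) \<in> G \<Longrightarrow> (u, v) \<in> G \<Longrightarrow> (x - u, y - v) \<in> G"
  using lin_op_add[of G x y "-u" "-v"] lin_op_minus[of G u v] by simp

lemma opapp_eq: "lin_op G \<Longrightarrow> (x, y) \<in> G \<Longrightarrow> opapp G x = y"
  unfolding opapp_def lin_op_def by (rule the_equality) blast+

lemma adj_iff: "(g, h) \<in> adj G \<longleftrightarrow> (\<forall>f k. (f, k) \<in> G \<longrightarrow> cinner k g = cinner f h)"
  by (simp add: adj_def)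

lemma adj_zero: "(0, 0) \<in> adj G"
  unfolding adj_iff by simp

lemma adj_add: "(g, h) \<in> adj G \<Longrightarrow> (g', h') \<in> adj G \<Longrightarrow> (g + g', h + h') \<in> adj G"
  unfolding adj_iff by (simp add: cinner_add_right)

lemma adj_scaleC: "(g, h) \<in> adj G \<Longrightarrow> (scaleC c g, scaleC c h) \<in> adj G"
  unfolding adj_iff by (simp add: cinner_scaleC_right)

lemma adj_diff: "(g, h) \<in> adj G \<Longrightarrow> (g', h') \<in> adj G \<Longrightarrow> (g - g', h - h') \<in> adj G"
  unfolding adj_iff by (simp add: cinner_diff_right)

lemma closed_adj: "closed (adj (G :: ('a::chilbert \<times> 'b::chilbert) set))"
proof -
  have "adj G = (\<Inter>q\<in>G. {p. cinner (snd q) (fst p) = cinner (fst q) (snd p)})"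
    unfolding adj_def by force
  moreover have "closed {p. cinner k (fst p) = cinner f (snd p)}" for f :: 'a and k :: 'b
    by (intro closed_Collect_eq continuous_on_compose2[OF continuous_on_cinner_right]
        continuous_on_fst continuous_on_snd continuous_on_id) auto
  ultimately show ?thesis by (auto intro!: closed_INT)
qed

lemma adj_unique_of_dense:
  assumes "closure (Domain G) = UNIV" "(g, h) \<in> adj G" "(g, h') \<in> adj G"
  shows "h = h'"
proof -
  have "(0, h - h') \<in> adj G" using adj_diff[OF assms(2,3)] by simp
  hence "h - h' = 0" by (intro orthogonal_dense_eq_0[OF assms(1)]) (auto simp: adj_iff)
  thus ?thesis by simp
qed

lemma shift_iff: "(f, w) \<in> shift A l \<longleftrightarrow> (\<exists>k. (f, k) \<in> A \<and> w = k - scaleC l f)"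
  unfolding shift_def by blast

lemma range_shiftE:
  assumes "Range (shift A l) = UNIV"
  obtains f k where "(f, k) \<in> A" "k - scaleC l f = u"
proof -
  have "u \<in> Range (shift A l)" using assms by simp
  thus thesis using that unfolding shift_def by blast
qed

lemma adj_eigenvector_eq_0:
  assumes "(a, scaleC l a) \<in> adj A" "Range (shift A (cnj l)) = UNIV"
  shows "a = 0"
proof -
  obtain g h where gh: "(g, h) \<in> A" "h - scaleC (cnj l) g = a" using range_shiftE[OF assms(2)] .
  have "cinner h a = cinner g (scaleC l a)" using assms(1) gh(1) unfolding adj_iff by blast
  hence "cinner (h - scaleC (cnj l) g) a = 0"
    by (simp add: cinner_diff_left cinner_scaleC_left cinner_scaleC_right)
  thus ?thesis using gh(2) by simp
qed

lemma norm_le_shift_adj: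
  assumes surj: "Range (shift A l) = UNIV" and C: "C \<ge> 0"
    and bound: "\<And>f k. (f, k) \<in> A \<Longrightarrow> norm f \<le> C * norm (k - scaleC l f)"
    and gh: "(g, h) \<in> adj A"
  shows "norm g \<le> C * norm (h - scaleC (cnj l) g)"
proof -
  obtain f k where fk: "(f, k) \<in> A" "k - scaleC l f = g" using range_shiftE[OF surj] .
  have "cinner k g = cinner f h" using gh fk(1) unfolding adj_iff by blast
  hence "cinner (k - scaleC l f) g = cinner f h - l * cinner f g"
    by (simp only: cinner_diff_left cinner_scaleC_left)
  also have "\<dots> = cinner f (h - scaleC (cnj l) g)"
    by (simp add: cinner_diff_right cinner_scaleC_right)
  finally have "cinner g g = cinner f (h - scaleC (cnj l) g)" using fk(2) by simp
  hence "norm g * norm g = cmod (cinner f (h - scaleC (cnj l) g))"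
    by (metis cinner_self norm_of_real power2_eq_square abs_power2)
  also have "\<dots> \<le> norm f * norm (h - scaleC (cnj l) g)" by (rule cauchy_schwarz)
  also have "\<dots> \<le> C * norm g * norm (h - scaleC (cnj l) g)"
    using bound[OF fk(1)] fk(2) by (intro mult_right_mono) auto
  finally have "norm g * norm g \<le> norm g * (C * norm (h - scaleC (cnj l) g))"
    by (simp add: mult_ac)
  thus ?thesis using C by (cases "g = 0") (auto simp: mult_le_cancel_left_pos)
qed

lemma csubspace_range_shift_adj: "csubspace (Range (shift (adj A) l))"
  unfolding csubspace_def
proof (intro conjI ballI allI)
  show "0 \<in> Range (shift (adj A) l)"
    unfolding Range_iff shift_iff by (intro exI[of _ 0] exI[of _ 0]) (simp add: adj_zero)
next
  fix a b assume "a \<in> Range (shift (adj A) l)" "b \<in> Range (shift (adj A) l)"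
  then obtain g h g' h' where
    "(g, h) \<in> adj A" "a = h - scaleC l g" "(g', h') \<in> adj A" "b = h' - scaleC l g'"
    unfolding Range_iff shift_iff by blast
  moreover from this have "(g + g', h + h') \<in> adj A" by (blast intro: adj_add)
  ultimately show "a + b \<in> Range (shift (adj A) l)"
    unfolding Range_iff shift_iff by (force simp: scaleC_add_right)
next
  fix c a assume "a \<in> Range (shift (adj A) l)"
  then obtain g h where gh: "(g, h) \<in> adj A" "a = h - scaleC l g"
    unfolding Range_iff shift_iff by blast
  moreover have "(scaleC c g, scaleC c h) \<in> adj A" using gh(1) by (rule adj_scaleC)
  ultimately show "scaleC c a \<in> Range (shift (adj A) l)"
    unfolding Range_iff shift_iff by (force simp: scaleC_diff_right scaleC_scaleC mult.commute)
qed

text \<open>An operator that is bounded below has closed range, since its graph is closed.\<close>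

lemma closed_range_shift_adj:
  assumes C: "C \<ge> 0" and bound: "\<And>g h. (g, h) \<in> adj A \<Longrightarrow> norm g \<le> C * norm (h - scaleC l g)"
  shows "closed (Range (shift (adj A) l))"
proof (unfold closed_sequential_limits, intro allI impI, elim conjE)
  fix u :: "nat \<Rightarrow> 'a" and v
  assume "\<forall>n. u n \<in> Range (shift (adj A) l)" and u_lim: "u \<longlonglongrightarrow> v"
  hence "\<forall>n. \<exists>p. p \<in> adj A \<and> u n = snd p - scaleC l (fst p)"
    unfolding Range_iff shift_iff by force
  then obtain p where p: "\<And>n. p n \<in> adj A \<and> u n = snd (p n) - scaleC l (fst (p n))" by metis
  define g where "g n = fst (p n)" for n
  define h where "h n = snd (p n)" for n
  have gh: "(g n, h n) \<in> adj A" and u: "u n = h n - scaleC l (g n)" for n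
    using p[of n] by (simp_all add: g_def h_def)
  have g_dist: "norm (g m - g n) \<le> C * norm (u m - u n)" for m n
  proof -
    have "norm (g m - g n) \<le> C * norm ((h m - h n) - scaleC l (g m - g n))"
      using adj_diff[OF gh gh] by (rule bound)
    thus ?thesis by (simp add: u scaleC_diff_right algebra_simps)
  qed
  have "Cauchy g"
  proof (rule metric_CauchyI)
    fix e :: real assume "0 < e"
    hence "e / (C + 1) > 0" using C by simp
    then obtain M where M: "\<forall>m\<ge>M. \<forall>n\<ge>M. dist (u m) (u n) < e / (C + 1)"
      using LIMSEQ_imp_Cauchy[OF u_lim] unfolding Cauchy_def by blast
    have "dist (g m) (g n) < e" if "m \<ge> M" "n \<ge> M" for m n
    proof -
      have "norm (g m - g n) \<le> (C + 1) * norm (u m - u n)"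
        using g_dist[of m n] norm_ge_zero[of "u m - u n"] unfolding distrib_right by linarith
      also have "\<dots> < (C + 1) * (e / (C + 1))"
        using M that C by (intro mult_strict_left_mono) (auto simp: dist_norm)
      finally show ?thesis using C by (simp add: dist_norm)
    qed
    thus "\<exists>M. \<forall>m\<ge>M. \<forall>n\<ge>M. dist (g m) (g n) < e" by blast
  qed
  then obtain g0 where g_lim: "g \<longlonglongrightarrow> g0" using Cauchy_convergent_iff convergent_def by blast
  have "(\<lambda>n. u n + scaleC l (g n)) \<longlonglongrightarrow> v + scaleC l g0"
    by (intro tendsto_add u_lim tendsto_scaleC g_lim)
  hence "(\<lambda>n. (g n, h n)) \<longlonglongrightarrow> (g0, v + scaleC l g0)"
    by (intro tendsto_Pair g_lim) (simp add: u)
  hence "(g0, v + scaleC l g0) \<in> adj A"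
    using closed_sequentially[OF closed_adj, of "\<lambda>n. (g n, h n)"] gh by blast
  thus "v \<in> Range (shift (adj A) l)" unfolding Range_iff shift_iff by force
qed

lemma range_shift_adj_eq_UNIV:
  assumes A: "adj (adj A) = A" and l: "l \<in> resolvent_set A"
  shows "Range (shift (adj A) (cnj l)) = UNIV"
proof -
  have surj: "Range (shift A l) = UNIV" and inj: "\<And>f. (f, 0) \<in> shift A l \<Longrightarrow> f = 0"
    and "\<exists>C. \<forall>f k. (f, k) \<in> shift A l \<longrightarrow> norm f \<le> C * norm k"
    using l unfolding resolvent_set_def by auto
  then obtain C where bound: "\<And>f k. (f, k) \<in> shift A l \<Longrightarrow> norm f \<le> C * norm k" by blast
  have C: "max C 0 \<ge> 0" by simp
  have bound': "norm f \<le> max C 0 * norm (k - scaleC l f)" if "(f, k) \<in> A" for f k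
  proof -
    have "(f, k - scaleC l f) \<in> shift A l" using that unfolding shift_iff by blast
    hence "norm f \<le> C * norm (k - scaleC l f)" by (rule bound)
    also have "\<dots> \<le> max C 0 * norm (k - scaleC l f)" by (intro mult_right_mono) auto
    finally show ?thesis .
  qed
  have "k = 0" if orth: "\<forall>u\<in>Range (shift (adj A) (cnj l)). cinner u k = 0" for k
  proof -
    have "(k, scaleC l k) \<in> adj (adj A)" unfolding adj_iff[of k "scaleC l k"]
    proof (intro allI impI)
      fix g h assume "(g, h) \<in> adj A"
      hence "h - scaleC (cnj l) g \<in> Range (shift (adj A) (cnj l))"
        unfolding Range_iff shift_iff by blast
      hence "cinner (h - scaleC (cnj l) g) k = 0" using orth by blast
      thus "cinner h k = cinner g (scaleC l k)"
        by (simp add: cinner_diff_left cinner_scaleC_left cinner_scaleC_right)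
    qed
    hence "(k, scaleC l k) \<in> A" using A by simp
    hence "(k, 0) \<in> shift A l" unfolding shift_iff by (intro exI[of _ "scaleC l k"]) simp
    thus ?thesis by (rule inj)
  qed
  moreover have "closed (Range (shift (adj A) (cnj l)))"
    using norm_le_shift_adj[OF surj C bound'] by (rule closed_range_shift_adj[OF C])
  ultimately show ?thesis using closed_csubspace_eq_UNIV csubspace_range_shift_adj by blast
qed

lemma eq_adj_of_range_shift:
  assumes sub: "A \<subseteq> adj A'" and surj: "Range (shift A l) = UNIV"
    and surj': "Range (shift A' (cnj l)) = UNIV"
  shows "A = adj A'"
proof
  show "adj A' \<subseteq> A"
  proof clarify
    fix a b assume ab: "(a, b) \<in> adj A'"
    obtain f k where fk: "(f, k) \<in> A" "k - scaleC l f = b - scaleC l a"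
      using range_shiftE[OF surj] .
    have "(a - f, b - k) \<in> adj A'" using adj_diff[OF ab] sub fk(1) by blast
    moreover have "b - k = scaleC l (a - f)"
      using fk(2) by (simp add: scaleC_diff_right algebra_simps)
    ultimately have "(a - f, scaleC l (a - f)) \<in> adj A'" by simp
    hence "a - f = 0" using surj' by (rule adj_eigenvector_eq_0)
    thus "(a, b) \<in> A" using fk by simp
  qed
qed (rule sub)

lemma resolvent_set_adj:
  assumes surj: "Range (shift (adj A) l) = UNIV" and surj': "Range (shift A (cnj l)) = UNIV"
  shows "l \<in> resolvent_set (adj A)"
proof -
  define P where "P = {f. \<exists>k. (f, k) \<in> adj A \<and> norm (k - scaleC l f) \<le> 1}"
  have "\<exists>c. \<forall>f\<in>P. cmod (cinner f x) \<le> c" for x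
  proof -
    obtain y ky where y: "(y, ky) \<in> A" "ky - scaleC (cnj l) y = x" using range_shiftE[OF surj'] .
    have "cmod (cinner f x) \<le> norm y" if "f \<in> P" for f
    proof -
      obtain k where fk: "(f, k) \<in> adj A" "norm (k - scaleC l f) \<le> 1"
        using \<open>f \<in> P\<close> unfolding P_def by blast
      have "cinner ky f = cinner y k" using y(1) fk(1) by (simp add: adj_iff)
      hence "cinner f x = cinner (k - scaleC l f) y"
        unfolding y(2)[symmetric] cinner_diff_left cinner_diff_right cinner_scaleC_left cinner_scaleC_right
        by (metis cinner_commute complex_cnj_cnj)
      hence "cmod (cinner f x) \<le> norm (k - scaleC l f) * norm y" by (simp add: cauchy_schwarz)
      also have "\<dots> \<le> norm y" using fk(2) by (simp add: mult_left_le_one_le)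
      finally show ?thesis .
    qed
    thus ?thesis by blast
  qed
  then obtain C where C: "\<And>f. f \<in> P \<Longrightarrow> norm f \<le> C" using weakly_bounded_imp_bounded by metis
  have inj: "f = 0" if "(f, 0) \<in> shift (adj A) l" for f
    using that surj' by (intro adj_eigenvector_eq_0) (auto simp: shift_iff)
  \<comment> \<open>rescale to \<open>norm w = 1\<close>, where the weak bound applies\<close>
  have "norm f \<le> C * norm w" if fw: "(f, w) \<in> shift (adj A) l" for f w
  proof (cases "w = 0")
    case True thus ?thesis using inj fw by simp
  next
    case False
    obtain k where fk: "(f, k) \<in> adj A" "w = k - scaleC l f" using fw unfolding shift_iff by blast
    define c where "c = complex_of_real (1 / norm w)"
    have c: "cmod c = 1 / norm w" unfolding c_def norm_of_real by simp
    have "(scaleC c f, scaleC c k) \<in> adj A" using fk(1) by (rule adj_scaleC)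
    moreover have "scaleC c k - scaleC l (scaleC c f) = scaleC c w"
      unfolding fk(2) by (simp add: scaleC_diff_right scaleC_scaleC mult.commute)
    moreover have "norm (scaleC c w) = 1" using False by (simp add: norm_scaleC c)
    ultimately have "scaleC c f \<in> P" unfolding P_def by (intro CollectI exI[of _ "scaleC c k"]) simp
    hence "norm (scaleC c f) \<le> C" by (rule C)
    hence "norm f / norm w \<le> C" by (simp add: norm_scaleC c)
    thus ?thesis using False by (simp add: divide_le_eq mult.commute)
  qed
  thus ?thesis unfolding resolvent_set_def using surj inj by blast
qed

section \<open>Boundary triples\<close>

lemma clinear_on_add: "clinear_on D G \<Longrightarrow> x \<in> D \<Longrightarrow> y \<in> D \<Longrightarrow> G (x + y) = G x + G y"
  unfolding clinear_on_def by blast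

lemma clinear_on_diff:
  assumes T: "lin_op T" and G: "clinear_on (Domain T) G" and xy: "x \<in> Domain T" "y \<in> Domain T"
  shows "G (x - y) = G x - G y"
proof -
  have "- y \<in> Domain T" using lin_op_minus[OF T] xy(2) by blast
  hence "G (x + - y) = G x + G (- y)" by (rule clinear_on_add[OF G xy(1)])
  moreover have "G (- y) = - G y"
    using G xy(2) scaleC_minus1[of y] scaleC_minus1[of "G y"] unfolding clinear_on_def by metis
  ultimately show ?thesis by simp
qed

lemma green_identity_swap:
  assumes "\<forall>f k g h. (f, k) \<in> T \<longrightarrow> (g, h) \<in> T' \<longrightarrow>
             cinner k g - cinner f h = cinner (G1 f) (G0' g) - cinner (G0 f) (G1' g)"
  shows "\<forall>g h f k. (g, h) \<in> T' \<longrightarrow> (f, k) \<in> T \<longrightarrow>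
             cinner h f - cinner g k = cinner (G1' g) (G0 f) - cinner (G0' g) (G1 f)"
proof (intro allI impI)
  fix g h f k assume "(g, h) \<in> T'" "(f, k) \<in> T"
  hence "cinner k g - cinner f h = cinner (G1 f) (G0' g) - cinner (G0 f) (G1' g)"
    using assms by blast
  hence "cnj (cinner f h) - cnj (cinner k g) = cnj (cinner (G0 f) (G1' g)) - cnj (cinner (G1 f) (G0' g))"
    by (simp add: algebra_simps flip: complex_cnj_diff)
  thus "cinner h f - cinner g k = cinner (G1' g) (G0 f) - cinner (G0' g) (G1 f)"
    by (simp only: cinner_commute[of h f] cinner_commute[of g k]
        cinner_commute[of "G1' g" "G0 f"] cinner_commute[of "G0' g" "G1 f"])
qed

text \<open>Every boundary value \<open>G0 f\<close> is attained on \<open>ker (T - l)\<close>, as \<open>f\<close> differs from an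
  element of \<open>ker (T - l)\<close> by an element of \<open>ker G0\<close>.\<close>

lemma dense_Domain_gamma_field:
  assumes T: "lin_op T" and G0: "clinear_on (Domain T) G0"
    and surj: "Range (shift (restr_ker T G0) l) = UNIV" and dense: "closure (G0 ` Domain T) = UNIV"
  shows "closure (Domain (gamma_field T G0 l)) = UNIV"
proof -
  have "G0 f \<in> Domain (gamma_field T G0 l)" if fk: "(f, k) \<in> T" for f k
  proof -
    obtain h kh where "(h, kh) \<in> restr_ker T G0" "kh - scaleC l h = k - scaleC l f"
      using range_shiftE[OF surj] .
    hence hk: "(h, kh) \<in> T" "G0 h = 0" "k - kh = scaleC l (f - h)"
      unfolding restr_ker_def by (auto simp: scaleC_diff_right algebra_simps)
    have "(f - h, scaleC l (f - h)) \<in> T" using lin_op_diff[OF T fk hk(1)] hk(3) by simp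
    moreover have "G0 (f - h) = G0 f"
      using clinear_on_diff[OF T G0 Domain.DomainI[OF fk] Domain.DomainI[OF hk(1)]] hk(2) by simp
    ultimately have "(G0 f, f - h) \<in> gamma_field T G0 l"
      unfolding gamma_field_def by (intro CollectI exI[of _ "f - h"]) simp
    thus ?thesis by blast
  qed
  hence "G0 ` Domain T \<subseteq> Domain (gamma_field T G0 l)" by blast
  hence "closure (G0 ` Domain T) \<subseteq> closure (Domain (gamma_field T G0 l))" by (rule closure_mono)
  thus ?thesis unfolding dense by auto
qed

text \<open>This says \<open>\<gamma>'(cnj l)\<^sup>* (A\<^sub>0 - l) = \<Gamma>\<^sub>1\<close> on \<open>dom A\<^sub>0\<close>.\<close>

lemma adj_gamma_field_restr_ker:
  assumes G: "\<forall>f k g h. (f, k) \<in> T \<longrightarrow> (g, h) \<in> T' \<longrightarrow>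
              cinner k g - cinner f h = cinner (G1 f) (G0' g) - cinner (G0 f) (G1' g)"
    and hk: "(h, kh) \<in> restr_ker T G0"
  shows "(kh - scaleC l h, G1 h) \<in> adj (gamma_field T' G0' (cnj l))"
  unfolding adj_iff
proof (intro allI impI)
  fix a g assume "(a, g) \<in> gamma_field T' G0' (cnj l)"
  hence a: "a = G0' g" and g: "(g, scaleC (cnj l) g) \<in> T'" unfolding gamma_field_def by auto
  have hT: "(h, kh) \<in> T" and h0: "G0 h = 0" using hk unfolding restr_ker_def by auto
  have "cinner kh g - cinner h (scaleC (cnj l) g) = cinner (G1 h) (G0' g) - cinner (G0 h) (G1' g)"
    using G hT g by blast
  hence "cinner (kh - scaleC l h) g = cinner (G1 h) (G0' g)"
    using h0 by (simp add: cinner_diff_left cinner_scaleC_left cinner_scaleC_right)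
  thus "cinner g (kh - scaleC l h) = cinner a (G1 h)" unfolding a by (metis cinner_commute)
qed

lemma exists_ext_op_correction:
  assumes T: "lin_op T" and lin: "clinear_on (Domain T) G0" "clinear_on (Domain T) G1"
    and B2: "lin_op B2" and h: "(h, kh) \<in> T" "G0 h = 0" "G1 h \<in> Domain B2"
    and ran: "opapp B2 (G1 h) \<in> Range (idminus (ocomp B2 (ocomp (weyl T G0 G1 l) B1)))"
  shows "\<exists>f1. (f1, scaleC l f1) \<in> T \<and> (h + f1, kh + scaleC l f1) \<in> ext_op T G0 G1 B1 B2"
proof -
  obtain b where b: "(G1 h, b) \<in> B2" using h(3) by blast
  then obtain \<phi> z where z: "b = \<phi> - z" "(\<phi>, z) \<in> ocomp B2 (ocomp (weyl T G0 G1 l) B1)"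
    using ran opapp_eq[OF B2 b] unfolding idminus_def by blast
  then obtain w y where wy: "(\<phi>, w) \<in> B1" "(w, y) \<in> weyl T G0 G1 l" "(y, z) \<in> B2"
    unfolding ocomp_def by blast
  then obtain f1 where f1: "w = G0 f1" "y = G1 f1" "(f1, scaleC l f1) \<in> T"
    unfolding weyl_def by blast
  have dom: "h \<in> Domain T" "f1 \<in> Domain T" using h(1) f1(3) by blast+
  have "(G1 h + G1 f1, b + z) \<in> B2" using lin_op_add[OF B2 b wy(3)] f1(2) by simp
  hence "(G1 (h + f1), \<phi>) \<in> B2" using clinear_on_add[OF lin(2) dom] z(1) by simp
  moreover have "G0 (h + f1) = w" using clinear_on_add[OF lin(1) dom] h(2) f1(1) by simp
  ultimately have "(G1 (h + f1), G0 (h + f1)) \<in> ocomp B1 B2" using wy(1) unfolding ocomp_def by blast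
  thus ?thesis using lin_op_add[OF T h(1) f1(3)] f1(3) unfolding ext_op_def by blast
qed

lemma range_shift_ext_op:
  assumes T: "lin_op T" and lin: "clinear_on (Domain T) G0" "clinear_on (Domain T) G1"
    and G: "\<forall>f k g h. (f, k) \<in> T \<longrightarrow> (g, h) \<in> T' \<longrightarrow>
              cinner k g - cinner f h = cinner (G1 f) (G0' g) - cinner (G0 f) (G1' g)"
    and dense: "closure (Domain (gamma_field T' G0' (cnj l))) = UNIV"
    and surj: "Range (shift (restr_ker T G0) l) = UNIV"
    and B2: "lin_op B2"
    and hyp: "\<forall>f. \<exists>x. (f, x) \<in> adj (gamma_field T' G0' (cnj l)) \<and> x \<in> Domain B2
                 \<and> opapp B2 x \<in> Range (idminus (ocomp B2 (ocomp (weyl T G0 G1 l) B1)))"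
  shows "Range (shift (ext_op T G0 G1 B1 B2) l) = UNIV"
proof (intro set_eqI iffI)
  fix k :: 'a
  obtain h kh where hk: "(h, kh) \<in> restr_ker T G0" "kh - scaleC l h = k"
    using range_shiftE[OF surj] .
  obtain x where x: "(k, x) \<in> adj (gamma_field T' G0' (cnj l))" "x \<in> Domain B2"
      "opapp B2 x \<in> Range (idminus (ocomp B2 (ocomp (weyl T G0 G1 l) B1)))"
    using hyp by blast
  have "(k, G1 h) \<in> adj (gamma_field T' G0' (cnj l))"
    using adj_gamma_field_restr_ker[OF G hk(1), of l] hk(2) by simp
  hence "x = G1 h" by (rule adj_unique_of_dense[OF dense x(1)])
  then obtain f1 where f1: "(f1, scaleC l f1) \<in> T"
    "(h + f1, kh + scaleC l f1) \<in> ext_op T G0 G1 B1 B2"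
    using exists_ext_op_correction[OF T lin B2] hk(1) x(2,3) unfolding restr_ker_def by blast
  have "k = (kh + scaleC l f1) - scaleC l (h + f1)"
    using hk(2) by (simp add: scaleC_add_right)
  hence "(h + f1, k) \<in> shift (ext_op T G0 G1 B1 B2) l"
    unfolding shift_iff using f1(2) by blast
  thus "k \<in> Range (shift (ext_op T G0 G1 B1 B2) l)" by (rule RangeI)
qed simp

lemma ext_op_subset_adj:
  assumes G: "\<forall>f k g h. (f, k) \<in> T \<longrightarrow> (g, h) \<in> T' \<longrightarrow>
              cinner k g - cinner f h = cinner (G1 f) (G0' g) - cinner (G0 f) (G1' g)"
    and B_adj: "\<forall>\<phi> a \<psi> b. (\<phi>, a) \<in> ocomp B1 B2 \<longrightarrow> (\<psi>, b) \<in> ocomp B1' B2' \<longrightarrow>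
                  cinner a \<psi> = cinner \<phi> b"
  shows "ext_op T G0 G1 B1 B2 \<subseteq> adj (ext_op T' G0' G1' B1' B2')"
proof (clarify, unfold adj_iff, intro allI impI)
  fix f k g h assume "(f, k) \<in> ext_op T G0 G1 B1 B2" "(g, h) \<in> ext_op T' G0' G1' B1' B2'"
  hence fk: "(f, k) \<in> T" "(G1 f, G0 f) \<in> ocomp B1 B2"
    and gh: "(g, h) \<in> T'" "(G1' g, G0' g) \<in> ocomp B1' B2'"
    unfolding ext_op_def by auto
  have "cinner (G0 f) (G1' g) = cinner (G1 f) (G0' g)" using B_adj fk(2) gh(2) by blast
  moreover have "cinner k g - cinner f h = cinner (G1 f) (G0' g) - cinner (G0 f) (G1' g)"
    using G fk(1) gh(1) by blast
  ultimately have "cinner k g = cinner f h" by simp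
  thus "cinner h f = cinner g k" by (metis cinner_commute)
qed

theorem theorem4p6:
  fixes S S' T T' :: "('h::chilbert \<times> 'h) set"
    and G0 G1 G0' G1' :: "'h \<Rightarrow> 'g::chilbert"
    and B1 B2 B1' B2' :: "('g \<times> 'g) set"
    and l :: complex
  assumes separable: "\<exists>D :: 'h set. countable D \<and> closure D = UNIV"
    and pair: "adjoint_pair S S'"
    and T_op: "lin_op T" and T'_op: "lin_op T'"
    and T_sub: "T \<subseteq> adj S" and T'_sub: "T' \<subseteq> adj S'"
    and T_core: "closure T = adj S" and T'_core: "closure T' = adj S'"
    and lin: "clinear_on (Domain T) G0" "clinear_on (Domain T) G1"
             "clinear_on (Domain T') G0'" "clinear_on (Domain T') G1'"
    and G: "\<forall>f k g h. (f, k) \<in> T \<longrightarrow> (g, h) \<in> T' \<longrightarrow>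
              cinner k g - cinner f h = cinner (G1 f) (G0' g) - cinner (G0 f) (G1' g)"
    and D: "closure (G0 ` Domain T) = UNIV" "closure (G0' ` Domain T') = UNIV"
    and M: "adj (restr_ker T G0) = restr_ker T' G0'" "adj (restr_ker T' G0') = restr_ker T G0"
    and rho_ne: "resolvent_set (restr_ker T G0) \<noteq> {}"
    and B_ops: "lin_op B1" "lin_op B2" "lin_op B1'" "lin_op B2'"
    and B_adj: "\<forall>\<phi> a \<psi> b. (\<phi>, a) \<in> ocomp B1 B2 \<longrightarrow> (\<psi>, b) \<in> ocomp B1' B2' \<longrightarrow>
                  cinner a \<psi> = cinner \<phi> b"
    and l_rho: "l \<in> resolvent_set (restr_ker T G0)"
    and hyp1: "\<forall>f. \<exists>x. (f, x) \<in> adj (gamma_field T' G0' (cnj l)) \<and> x \<in> Domain B2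
                 \<and> opapp B2 x \<in> Range (idminus (ocomp B2 (ocomp (weyl T G0 G1 l) B1)))"
    and hyp2: "\<forall>g. \<exists>x. (g, x) \<in> adj (gamma_field T G0 l) \<and> x \<in> Domain B2'
                 \<and> opapp B2' x \<in> Range (idminus (ocomp B2' (ocomp (weyl T' G0' G1' (cnj l)) B1')))"
  shows "ext_op T G0 G1 B1 B2 = adj (ext_op T' G0' G1' B1' B2')
         \<and> closed (ext_op T G0 G1 B1 B2)
         \<and> l \<in> resolvent_set (ext_op T G0 G1 B1 B2)"
proof -
  have surj0: "Range (shift (restr_ker T G0) l) = UNIV"
    using l_rho unfolding resolvent_set_def by simp
  have "adj (adj (restr_ker T G0)) = restr_ker T G0" using M by simp
  hence surj0': "Range (shift (restr_ker T' G0') (cnj l)) = UNIV"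
    using range_shift_adj_eq_UNIV[OF _ l_rho] M(1) by simp
  have dense: "closure (Domain (gamma_field T G0 (cnj (cnj l)))) = UNIV"
    "closure (Domain (gamma_field T' G0' (cnj l))) = UNIV"
    using dense_Domain_gamma_field[OF T_op lin(1) surj0 D(1)]
      dense_Domain_gamma_field[OF T'_op lin(3) surj0' D(2)] by simp_all
  have hyp2': "\<forall>g. \<exists>x. (g, x) \<in> adj (gamma_field T G0 (cnj (cnj l))) \<and> x \<in> Domain B2'
      \<and> opapp B2' x \<in> Range (idminus (ocomp B2' (ocomp (weyl T' G0' G1' (cnj l)) B1')))"
    using hyp2 by simp
  have surj: "Range (shift (ext_op T G0 G1 B1 B2) l) = UNIV"
    by (rule range_shift_ext_op[OF T_op lin(1,2) G dense(2) surj0 B_ops(2) hyp1])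
  have surj': "Range (shift (ext_op T' G0' G1' B1' B2') (cnj l)) = UNIV"
    by (rule range_shift_ext_op[OF T'_op lin(3,4) green_identity_swap[OF G] dense(1) surj0' B_ops(4) hyp2'])
  have eq: "ext_op T G0 G1 B1 B2 = adj (ext_op T' G0' G1' B1' B2')"
    by (rule eq_adj_of_range_shift[OF ext_op_subset_adj[OF G B_adj] surj surj'])
  moreover have "closed (ext_op T G0 G1 B1 B2)" unfolding eq by (rule closed_adj)
  moreover have "l \<in> resolvent_set (ext_op T G0 G1 B1 B2)"
    unfolding eq using surj[unfolded eq] surj' by (rule resolvent_set_adj)
  ultimately show ?thesis by blast
qed

end
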